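(* Let $h > 0$, $c > 0$, and let $L, b$ be real numbers with $L > b > 0$. Define $\Phi : \mathbf{C} \to \mathbf{R}$ by $\Phi(s) = (\operatorname{Im} s)^2$ if $\operatorname{Re} s \leq 0$ and $\Phi(s) = (\operatorname{Im} s)^2 - (\operatorname{Re} s)^2$ if $\operatorname{Re} s \geq 0$. Let $F$ be an entire function satisfying $$e^{-\frac{\Phi(s)}{2h}}|F(s)| \leq 1 \quad \text{for all } s \in \mathbf{C}, \qquad e^{-\frac{\Phi(s)}{2h}}|F(s)| \leq e^{-\frac{c}{2h}} \quad \text{when } |s - L| \leq b.$$ Then for every $r \geq 0$ there exist $c' > 0$ and $\delta > 0$, depending only on $c, L, b, r$ (and not on $h$ or $F$), such that $$e^{-\frac{\Phi(s)}{2h}}|F(s)| \leq e^{-\frac{c'}{2h}} \quad \text{whenever } |\operatorname{Re} s| \leq \delta \text{ and } |\operatorname{Im} s| \leq r.$$ *)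

theory Defs
  imports "HOL-Analysis.Analysis"
begin

definition Phi :: "complex \<Rightarrow> real" where
  "Phi s = (if Re s \<le> 0 then (Im s)\<^sup>2 else (Im s)\<^sup>2 - (Re s)\<^sup>2)"

end

theory Submission
  imports Defs "HOL-Complex_Analysis.Complex_Analysis"
begin

text \<open>
  Multiplying \<open>F\<close> by \<open>exp (s\<^sup>2 / 2h)\<close> turns the weighted hypotheses into plain bounds on an
  entire function \<open>G\<close>: \<open>|G| \<le> exp (e\<^sup>2 / 2h)\<close> on the half-plane \<open>Re s \<ge> -e\<close> and
  \<open>|G| \<le> exp (-c / 2h)\<close> on the disc \<open>|s - L| \<le> b\<close>, while the weighted quantity never exceeds
  \<open>|G|\<close>. A Moebius map sends the unit disc onto \<open>Re s > -e\<close> and \<open>0\<close> to \<open>L\<close>; it carries a small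
  disc about \<open>0\<close> into \<open>|s - L| \<le> b\<close> and the rectangle \<open>|Re s| \<le> e/2, |Im s| \<le> r\<close> comes from a
  disc of radius \<open>t < 1\<close>. The three-circles theorem then bounds \<open>|G|\<close> on the rectangle by
  \<open>exp ((e\<^sup>2 - (c + e\<^sup>2) \<kappa>) / 2h)\<close> with \<open>\<kappa>\<close> of order \<open>e\<close>, so a small \<open>e\<close>, independent
  of \<open>h\<close> and \<open>F\<close>, makes the exponent negative.
\<close>

lemma annulus_power_bound:
  fixes H :: "complex \<Rightarrow> complex" and N K :: nat and \<beta> :: real
  assumes hol: "H holomorphic_on cball 0 R" and "0 < \<rho>" "\<rho> < R"
    and outer: "\<And>z. norm z = R \<Longrightarrow> norm (H z) \<le> 1"
    and inner: "\<And>z. norm z = \<rho> \<Longrightarrow> norm (H z) \<le> exp (-\<beta>)"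
    and KN: "K * ln (R/\<rho>) \<le> N * \<beta>"
    and w: "\<rho> \<le> norm w" "norm w \<le> R"
  shows "norm (H w) ^ N \<le> (norm w / R) ^ K"
proof -
  define \<Psi> where "\<Psi> z = H z ^ N * (of_real R / z) ^ K" for z
  define S where "S = cball (0::complex) R - ball 0 \<rho>"
  have clS: "closure S = S" unfolding S_def by (blast intro!: closure_closed)
  have inS: "interior S = ball 0 R - cball 0 \<rho>"
    unfolding S_def using \<open>0 < \<rho>\<close> by (simp add: interior_diff)
  have norm_\<Psi>: "norm (\<Psi> z) = norm (H z) ^ N * (R / norm z) ^ K" for z
    unfolding \<Psi>_def using \<open>\<rho> < R\<close> \<open>0 < \<rho>\<close> by (simp add: norm_mult norm_power norm_divide)
  have "norm (\<Psi> w) \<le> 1"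
  proof (rule maximum_modulus_frontier [of \<Psi> S])
    show "\<Psi> holomorphic_on interior S" unfolding inS \<Psi>_def using \<open>0 < \<rho>\<close>
      by (intro holomorphic_intros holomorphic_on_subset[OF hol]) auto
    show "continuous_on (closure S) \<Psi>" unfolding clS unfolding \<Psi>_def S_def using \<open>0 < \<rho>\<close>
      by (intro continuous_intros holomorphic_on_imp_continuous_on holomorphic_on_subset[OF hol]) auto
    show "bounded S" unfolding S_def by auto
    show "w \<in> S" unfolding S_def using w by auto
    fix z assume "z \<in> frontier S"
    then have "norm z = R \<or> norm z = \<rho>" unfolding frontier_def clS inS unfolding S_def by auto
    then show "norm (\<Psi> z) \<le> 1"
    proof
      assume "norm z = R"
      then show ?thesis using outer[of z] \<open>0 < \<rho>\<close> \<open>\<rho> < R\<close> by (simp add: norm_\<Psi> power_le_one)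
    next
      assume z: "norm z = \<rho>"
      have "norm (H z) ^ N \<le> exp (-\<beta>) ^ N"
        using inner[OF z] by (simp add: power_mono)
      also have "\<dots> = exp (- (N * \<beta>))" by (simp add: exp_of_nat_mult[symmetric])
      finally have "norm (H z) ^ N \<le> exp (- (N * \<beta>))" .
      moreover have "(R / \<rho>) ^ K = exp (K * ln (R/\<rho>))"
        using \<open>0 < \<rho>\<close> \<open>\<rho> < R\<close> by (simp add: exp_of_nat_mult)
      then have "(R / \<rho>) ^ K \<le> exp (N * \<beta>)" using KN by simp
      ultimately have "norm (H z) ^ N * (R / \<rho>) ^ K \<le> exp (- (N * \<beta>)) * exp (N * \<beta>)"
        using \<open>0 < \<rho>\<close> \<open>\<rho> < R\<close> by (intro mult_mono) auto
      then show ?thesis using z by (simp add: norm_\<Psi> exp_minus field_simps)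
    qed
  qed
  moreover have "0 < norm w" using w \<open>0 < \<rho>\<close> by linarith
  moreover have "0 < R" using \<open>0 < \<rho>\<close> \<open>\<rho> < R\<close> by linarith
  ultimately show ?thesis by (simp add: norm_\<Psi> power_divide field_simps)
qed

lemma obtain_nat_ratio_approx:
  fixes \<alpha> :: real
  assumes "0 < \<alpha>"
  obtains N K :: nat where "0 < N" "K \<le> N * \<alpha>" "\<alpha> / 2 \<le> K / N"
proof
  define N where "N = nat \<lceil>2/\<alpha>\<rceil>"
  define K where "K = nat \<lfloor>N * \<alpha>\<rfloor>"
  have "2/\<alpha> \<le> N" unfolding N_def by linarith
  then have N2: "2 \<le> N * \<alpha>" using assms by (simp add: divide_le_eq)
  then show "0 < N" using assms by (cases N) auto
  show "K \<le> N * \<alpha>" unfolding K_def using assms by simp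
  have "N * \<alpha> - 1 \<le> K" unfolding K_def using assms by linarith
  with N2 \<open>0 < N\<close> show "\<alpha> / 2 \<le> K / N" by (simp add: field_simps)
qed

text \<open>
  Hadamard's bound with the exponent halved: the factor \<open>2\<close> is lost by replacing
  \<open>\<beta> / ln (R/\<rho>)\<close> by a ratio \<open>K / N\<close> of integers, which keeps \<open>H\<^sup>N (R/z)\<^sup>K\<close> single-valued.
\<close>
lemma three_circles_bound:
  fixes H :: "complex \<Rightarrow> complex"
  assumes hol: "H holomorphic_on cball 0 R" and "0 < \<rho>" "\<rho> < R" "0 < \<beta>"
    and outer: "\<And>z. norm z \<le> R \<Longrightarrow> norm (H z) \<le> 1"
    and inner: "\<And>z. norm z \<le> \<rho> \<Longrightarrow> norm (H z) \<le> exp (-\<beta>)"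
    and t: "\<rho> \<le> t" "t \<le> R" and w: "norm w \<le> t"
  shows "norm (H w) \<le> exp (- \<beta> * (ln (R/t) / (2 * ln (R/\<rho>))))"
proof -
  have "0 < ln (R/\<rho>)" using \<open>0 < \<rho>\<close> \<open>\<rho> < R\<close> by simp
  have ln_Rt: "0 \<le> ln (R/t)" "ln (R/t) \<le> ln (R/\<rho>)"
    using \<open>0 < \<rho>\<close> \<open>\<rho> < R\<close> t by (auto intro: divide_left_mono)
  define \<alpha> where "\<alpha> = \<beta> / ln (R/\<rho>)"
  have "0 < \<alpha>" using \<open>0 < ln (R/\<rho>)\<close> \<open>0 < \<beta>\<close> by (simp add: \<alpha>_def)
  have goal: "- \<beta> * (ln (R/t) / (2 * ln (R/\<rho>))) = - (\<alpha> / 2 * ln (R/t))"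
    unfolding \<alpha>_def by (simp add: field_simps)
  show ?thesis
  proof (cases "norm w < \<rho>")
    case True
    have "\<alpha> * ln (R/t) \<le> \<alpha> * ln (R/\<rho>)" "0 \<le> \<alpha> * ln (R/t)"
      using ln_Rt \<open>0 < \<alpha>\<close> by (simp_all add: mult_left_mono)
    then have "\<alpha> / 2 * ln (R/t) \<le> \<alpha> * ln (R/\<rho>)" by linarith
    also have "\<dots> = \<beta>" using \<open>0 < ln (R/\<rho>)\<close> by (simp add: \<alpha>_def)
    finally have "\<alpha> / 2 * ln (R/t) \<le> \<beta>" .
    then show ?thesis using inner[of w] True unfolding goal by (smt (verit) exp_mono)
  next
    case False
    obtain N K :: nat where "0 < N" and KN: "K \<le> N * \<alpha>" and NK: "\<alpha> / 2 \<le> K / N"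
      using obtain_nat_ratio_approx[OF \<open>0 < \<alpha>\<close>] .
    have "K * ln (R/\<rho>) \<le> N * \<alpha> * ln (R/\<rho>)"
      using KN \<open>0 < ln (R/\<rho>)\<close> by (simp add: mult_right_mono)
    also have "\<dots> = N * \<beta>" using \<open>0 < ln (R/\<rho>)\<close> by (simp add: \<alpha>_def)
    finally have "K * ln (R/\<rho>) \<le> N * \<beta>" .
    then have "norm (H w) ^ N \<le> (norm w / R) ^ K"
      using False w t by (intro annulus_power_bound[OF hol \<open>0 < \<rho>\<close> \<open>\<rho> < R\<close>]) (auto intro: outer inner)
    also have "\<dots> \<le> (t / R) ^ K" using w \<open>0 < \<rho>\<close> \<open>\<rho> < R\<close> by (intro power_mono divide_right_mono) auto
    also have "\<dots> = exp (- ln (R/t)) ^ K"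
      using \<open>0 < \<rho>\<close> \<open>\<rho> < R\<close> t by (simp add: exp_minus)
    also have "\<dots> = exp (N * - (K / N * ln (R/t)))"
      using \<open>0 < N\<close> by (simp add: exp_of_nat_mult[symmetric])
    also have "\<dots> = exp (- (K / N * ln (R/t))) ^ N"
      by (rule exp_of_nat_mult)
    finally have "norm (H w) \<le> exp (- (K / N * ln (R/t)))"
      using \<open>0 < N\<close> by (simp add: power_mono_iff)
    also have "\<dots> \<le> exp (- (\<alpha> / 2 * ln (R/t)))"
      using mult_right_mono[OF NK ln_Rt(1)] by simp
    finally show ?thesis unfolding goal .
  qed
qed

lemma Re_cayley_nonneg:
  fixes u :: complex
  assumes "norm u < 1"
  shows "0 \<le> Re ((1 + u) / (1 - u))"
proof -
  have "(Re u)^2 + (Im u)^2 < 1"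
    using assms by (simp add: abs_square_less_1 flip: cmod_power2)
  moreover have "0 \<le> (1 - Re u) * (1 - Re u) + Im u * Im u" by simp
  ultimately show ?thesis unfolding Re_divide
    by (intro divide_nonneg_nonneg) (auto simp: power2_eq_square algebra_simps)
qed

lemma norm_cayley_minus_one_le:
  fixes u :: complex
  assumes "norm u \<le> 1/2"
  shows "norm ((1 + u) / (1 - u) - 1) \<le> 4 * norm u"
proof -
  have "1/2 \<le> norm (1 - u)" using assms norm_triangle_ineq2[of 1 u] by simp
  then have "1 - u \<noteq> 0" by auto
  then have "norm ((1 + u) / (1 - u) - 1) = 2 * norm u / norm (1 - u)"
    by (simp add: field_simps norm_divide norm_mult)
  also have "\<dots> \<le> 2 * norm u / (1/2)"
    using \<open>1/2 \<le> norm (1 - u)\<close> by (intro divide_left_mono) auto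
  finally show ?thesis by simp
qed

text \<open>The unit disc onto \<open>Re z > -e\<close>, with \<open>0 \<mapsto> L\<close>; the inverse is \<open>s \<mapsto> (s - L) / (s + L + 2e)\<close>.\<close>
definition half_plane_map :: "real \<Rightarrow> real \<Rightarrow> complex \<Rightarrow> complex" where
  "half_plane_map e L u = of_real (L + e) * ((1 + u) / (1 - u)) - of_real e"

lemma half_plane_map_holomorphic:
  assumes "1 \<notin> S"
  shows "half_plane_map e L holomorphic_on S"
  unfolding half_plane_map_def[abs_def] using assms by (intro holomorphic_intros) auto

lemma Re_half_plane_map_ge:
  assumes "norm u < 1" "0 \<le> L + e"
  shows "- e \<le> Re (half_plane_map e L u)"
proof -
  have "Re (half_plane_map e L u) = (L + e) * Re ((1 + u) / (1 - u)) - e"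
    by (simp add: half_plane_map_def del: of_real_add times_divide_eq_right)
  with Re_cayley_nonneg[OF assms(1)] assms(2) show ?thesis by simp
qed

lemma norm_half_plane_map_minus_le:
  assumes "norm u \<le> 1/2" "0 \<le> L + e"
  shows "norm (half_plane_map e L u - of_real L) \<le> 4 * (L + e) * norm u"
proof -
  have "half_plane_map e L u - of_real L = of_real (L + e) * ((1 + u) / (1 - u) - 1)"
    by (simp add: half_plane_map_def algebra_simps)
  then have "norm (half_plane_map e L u - of_real L) = (L + e) * norm ((1 + u) / (1 - u) - 1)"
    using assms(2) by (simp add: norm_mult del: of_real_add)
  also have "\<dots> \<le> (L + e) * (4 * norm u)"
    using norm_cayley_minus_one_le[OF assms(1)] assms(2) by (rule mult_left_mono)
  finally show ?thesis by (simp only: mult_ac)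
qed

lemma half_plane_map_inverse:
  assumes "s + of_real (L + 2*e) \<noteq> 0" and "L + e \<noteq> 0"
  shows "half_plane_map e L ((s - of_real L) / (s + of_real (L + 2*e))) = s"
proof -
  define D where "D = s + of_real (L + 2*e)"
  define P :: complex where "P = of_real (L + e)"
  have "D \<noteq> 0" "P \<noteq> 0" using assms by (simp_all add: D_def P_def del: of_real_add)
  have "1 + (s - of_real L) / D = 2 * (s + of_real e) / D" "1 - (s - of_real L) / D = 2 * P / D"
    using \<open>D \<noteq> 0\<close> by (simp_all add: D_def P_def field_simps)
  moreover have "P * ((2 * X / D) / (2 * P / D)) = X" for X
    using \<open>D \<noteq> 0\<close> \<open>P \<noteq> 0\<close> by simp
  ultimately have "half_plane_map e L ((s - of_real L) / D) = (s + of_real e) - of_real e"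
    unfolding half_plane_map_def P_def[symmetric] by (simp only:)
  then show ?thesis by (simp add: D_def)
qed

lemma norm_half_plane_preimage_le:
  fixes s :: complex and L e r :: real
  assumes "\<bar>Re s\<bar> \<le> e/2" "\<bar>Im s\<bar> \<le> r" "0 < e" "0 \<le> L"
  shows "norm ((s - of_real L) / (s + of_real (L + 2*e))) ^ 2
           \<le> ((L + e/2)^2 + r^2) / ((L + 3*e/2)^2 + r^2)"
proof -
  define A where "A = (L + e/2)^2"
  define B where "B = (L + 3*e/2)^2"
  have num: "(Re s - L)^2 \<le> A" and den: "B \<le> (Re s + L + 2*e)^2"
    unfolding A_def B_def using assms by (auto intro: power2_le_iff_abs_le[THEN iffD2])
  have "A \<le> B" "0 < B" unfolding A_def B_def using assms by (auto intro: power_mono)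
  have "(Im s)^2 \<le> r^2" using assms(2) by (metis abs_ge_zero power2_abs power_mono)
  have cross: "(A + (Im s)^2) * (B + r^2) \<le> (A + r^2) * (B + (Im s)^2)"
  proof -
    have "0 \<le> (r^2 - (Im s)^2) * (B - A)"
      using \<open>(Im s)^2 \<le> r^2\<close> \<open>A \<le> B\<close> by simp
    then show ?thesis by (simp add: algebra_simps)
  qed
  have "norm ((s - of_real L) / (s + of_real (L + 2*e))) ^ 2
          = ((Re s - L)^2 + (Im s)^2) / ((Re s + L + 2*e)^2 + (Im s)^2)"
    by (simp add: norm_divide power_divide cmod_power2 add.assoc)
  also have "\<dots> \<le> (A + (Im s)^2) / (B + (Im s)^2)"
    using num den \<open>0 < B\<close> by (intro frac_le) (auto simp: A_def add_pos_nonneg)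
  also have "\<dots> \<le> (A + r^2) / (B + r^2)"
    using cross \<open>0 < B\<close> by (simp add: divide_simps add_pos_nonneg)
  finally show ?thesis unfolding A_def B_def .
qed

lemma preimage_radius_bounds:
  fixes L e r :: real
  assumes "0 < e" "e \<le> L" "0 \<le> r"
  defines "q \<equiv> ((L + e/2)^2 + r^2) / ((L + 3*e/2)^2 + r^2)"
  shows "4/25 \<le> q" "q < 1" "2*L*e / ((5*L/2)^2 + r^2) \<le> - ln q"
proof -
  define A where "A = (L + e/2)^2"
  define B where "B = (L + 3*e/2)^2"
  have "L^2 \<le> A" "A < B" "B \<le> (5*L/2)^2"
    unfolding A_def B_def using assms by (auto intro!: power_mono power_strict_mono)
  have "0 < B" using \<open>L^2 \<le> A\<close> \<open>A < B\<close> by (smt (verit) zero_le_power2)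
  have B_minus_A: "B - A = 2*L*e + 2*e^2" unfolding A_def B_def by (simp add: power2_eq_square algebra_simps)
  have q: "q = (A + r^2) / (B + r^2)" unfolding q_def A_def B_def ..
  show "q < 1" unfolding q using \<open>A < B\<close> \<open>0 < B\<close> by (simp add: divide_less_eq add_pos_nonneg)
  have "4 * (B + r^2) \<le> 25 * (A + r^2)"
    using \<open>L^2 \<le> A\<close> \<open>B \<le> (5*L/2)^2\<close> by (simp add: power_divide) (smt (verit) zero_le_power2)
  then show "4/25 \<le> q" unfolding q using \<open>0 < B\<close> by (simp add: divide_simps add_pos_nonneg)
  have "2*L*e / ((5*L/2)^2 + r^2) \<le> (B - A) / (B + r^2)"
    unfolding B_minus_A using \<open>B \<le> (5*L/2)^2\<close> \<open>0 < B\<close> assms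
    by (intro frac_le) (auto simp: add_pos_nonneg)
  also have "\<dots> = 1 - q"
  proof -
    have "B + r^2 \<noteq> 0" using \<open>0 < B\<close> by (smt (verit) zero_le_power2)
    then show ?thesis unfolding q by (simp add: field_simps)
  qed
  also have "\<dots> \<le> - ln q" using ln_le_minus_one[of q] \<open>4/25 \<le> q\<close> by simp
  finally show "2*L*e / ((5*L/2)^2 + r^2) \<le> - ln q" .
qed

lemma half_plane_map_two_constant:
  fixes G :: "complex \<Rightarrow> complex" and L e b m M \<rho> t R :: real
  assumes holG: "G holomorphic_on UNIV"
    and "0 < \<rho>" "\<rho> \<le> t" "t \<le> R" "\<rho> < R" "R < 1" "\<rho> \<le> 1/2"
    and "0 \<le> L + e" "4 * (L + e) * \<rho> \<le> b" "0 < m + M"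
    and upper: "\<And>z. - e \<le> Re z \<Longrightarrow> norm (G z) \<le> exp M"
    and near: "\<And>z. norm (z - of_real L) \<le> b \<Longrightarrow> norm (G z) \<le> exp (- m)"
    and u: "norm u \<le> t"
  shows "norm (G (half_plane_map e L u)) \<le> exp (M - (m + M) * (ln (R/t) / (2 * ln (R/\<rho>))))"
proof -
  define H where "H u = G (half_plane_map e L u) * of_real (exp (- M))" for u
  have norm_H: "norm (H u) = norm (G (half_plane_map e L u)) * exp (- M)" for u
    by (simp add: H_def norm_mult)
  have "H holomorphic_on cball 0 R"
  proof -
    have "half_plane_map e L holomorphic_on cball 0 R"
      using \<open>R < 1\<close> by (intro half_plane_map_holomorphic) auto
    then have "(G \<circ> half_plane_map e L) holomorphic_on cball 0 R"
      by (rule holomorphic_on_compose[OF _ holomorphic_on_subset[OF holG]]) auto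
    then show ?thesis unfolding H_def o_def by (intro holomorphic_intros)
  qed
  moreover have "norm (H z) \<le> 1" if "norm z \<le> R" for z
  proof -
    have "norm (G (half_plane_map e L z)) \<le> exp M"
      using that \<open>R < 1\<close> \<open>0 \<le> L + e\<close> by (intro upper Re_half_plane_map_ge) auto
    then show ?thesis unfolding norm_H using mult_right_mono[of _ "exp M" "exp (- M)"] by (simp flip: exp_add)
  qed
  moreover have "norm (H z) \<le> exp (- (m + M))" if "norm z \<le> \<rho>" for z
  proof -
    have "norm (half_plane_map e L z - of_real L) \<le> 4 * (L + e) * norm z"
      using that \<open>\<rho> \<le> 1/2\<close> \<open>0 \<le> L + e\<close> by (intro norm_half_plane_map_minus_le) auto
    also have "\<dots> \<le> 4 * (L + e) * \<rho>" using that \<open>0 \<le> L + e\<close> by (simp add: mult_left_mono)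
    finally have "norm (G (half_plane_map e L z)) \<le> exp (- m)" using \<open>4 * (L + e) * \<rho> \<le> b\<close> by (intro near) auto
    then show ?thesis unfolding norm_H using mult_right_mono[of _ "exp (- m)" "exp (- M)"] by (simp flip: exp_add)
  qed
  ultimately have "norm (H u) \<le> exp (- (m + M) * (ln (R/t) / (2 * ln (R/\<rho>))))"
    using \<open>0 < \<rho>\<close> \<open>\<rho> < R\<close> \<open>0 < m + M\<close> \<open>\<rho> \<le> t\<close> \<open>t \<le> R\<close> u by (intro three_circles_bound) auto
  have "norm (G (half_plane_map e L u)) = norm (H u) * exp M"
    by (simp add: norm_H flip: exp_add)
  also have "\<dots> \<le> exp (- (m + M) * (ln (R/t) / (2 * ln (R/\<rho>)))) * exp M"
    using \<open>norm (H u) \<le> _\<close> by (rule mult_right_mono) simp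
  also have "\<dots> = exp (M - (m + M) * (ln (R/t) / (2 * ln (R/\<rho>))))"
    using exp_add[of "- \<beta> * K" M for \<beta> K :: real] by (simp only: diff_conv_add_uminus add.commute minus_mult_left)
  finally show ?thesis .
qed

lemma three_circles_exponent_ge:
  fixes L b e r :: real
  assumes pos: "0 < b" "b < L" "0 < e" "e \<le> L" "0 \<le> r"
  defines "q \<equiv> ((L + e/2)^2 + r^2) / ((L + 3*e/2)^2 + r^2)" and "\<rho> \<equiv> b / (4 * (L + e))"
  shows "0 < \<rho>" "\<rho> < 1/4" "\<rho> < sqrt q" "sqrt q < sqrt (sqrt q)" "sqrt (sqrt q) < 1"
    and "L * e / (4 * ((5*L/2)^2 + r^2) * ln (8*L/b))
           \<le> ln (sqrt (sqrt q) / sqrt q) / (2 * ln (sqrt (sqrt q) / \<rho>))"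
proof -
  define t where "t = sqrt q"
  define R where "R = sqrt t"
  define D where "D = (5*L/2)^2 + r^2"
  have q: "4/25 \<le> q" "q < 1" "2*L*e / D \<le> - ln q"
    using preimage_radius_bounds[OF \<open>0 < e\<close> \<open>e \<le> L\<close> \<open>0 \<le> r\<close>] by (simp_all add: q_def D_def)
  have "2/5 \<le> t" unfolding t_def by (rule real_le_rsqrt) (use q(1) in \<open>simp add: power_divide\<close>)
  then have "0 < t" by linarith
  have "t < 1" unfolding t_def using q by simp
  show "t < R" "R < 1" unfolding R_def using \<open>2/5 \<le> t\<close> \<open>t < 1\<close>
    by (auto simp: real_less_rsqrt power2_eq_square mult_less_cancel_left1)
  show "0 < \<rho>" "\<rho> < 1/4" unfolding \<rho>_def using pos by (simp_all add: divide_simps)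
  then show "\<rho> < t" using \<open>2/5 \<le> t\<close> by linarith
  have "ln (R/t) = - ln q / 4"
  proof -
    have "0 < R" "t = R^2" unfolding R_def using \<open>0 < t\<close> by simp_all
    then have "R / t = 1 / R" by (simp add: power2_eq_square)
    then show ?thesis using q(1) \<open>0 < t\<close> by (simp add: R_def t_def ln_div ln_sqrt)
  qed
  have "ln q \<le> 0" using q by simp
  have "0 < ln (R/\<rho>)" using \<open>0 < \<rho>\<close> \<open>\<rho> < t\<close> \<open>t < R\<close> by simp
  have "R / \<rho> \<le> 1 / \<rho>" using \<open>R < 1\<close> \<open>0 < \<rho>\<close> by (simp add: divide_right_mono)
  also have "\<dots> \<le> 8*L/b" unfolding \<rho>_def using pos by (simp add: divide_right_mono)
  finally have "ln (R/\<rho>) \<le> ln (8*L/b)" using \<open>0 < \<rho>\<close> \<open>t < R\<close> \<open>0 < t\<close> by (intro ln_mono) auto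
  have "L * e / (4 * D * ln (8*L/b)) = (2*L*e / D / 4) / (2 * ln (8*L/b))" by simp
  also have "\<dots> \<le> ln (R/t) / (2 * ln (R/\<rho>))"
    unfolding \<open>ln (R/t) = - ln q / 4\<close> using q \<open>ln q \<le> 0\<close> \<open>0 < ln (R/\<rho>)\<close> \<open>ln (R/\<rho>) \<le> ln (8*L/b)\<close> assms
    by (intro frac_le) (auto simp: D_def)
  finally show "L * e / (4 * ((5*L/2)^2 + r^2) * ln (8*L/b)) \<le> ln (R/t) / (2 * ln (R/\<rho>))"
    unfolding D_def .
qed

lemma half_plane_two_constant:
  fixes G :: "complex \<Rightarrow> complex" and L b e r m M :: real
  assumes holG: "G holomorphic_on UNIV"
    and "0 < b" "b < L" "0 < e" "e \<le> L" "0 \<le> r" "0 < m + M"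
    and upper: "\<And>z. - e \<le> Re z \<Longrightarrow> norm (G z) \<le> exp M"
    and near: "\<And>z. norm (z - of_real L) \<le> b \<Longrightarrow> norm (G z) \<le> exp (- m)"
    and s: "\<bar>Re s\<bar> \<le> e/2" "\<bar>Im s\<bar> \<le> r"
  shows "norm (G s) \<le> exp (M - (m + M) * (L * e / (4 * ((5*L/2)^2 + r^2) * ln (8*L/b))))"
proof -
  define q where "q = ((L + e/2)^2 + r^2) / ((L + 3*e/2)^2 + r^2)"
  define t where "t = sqrt q"
  define R where "R = sqrt t"
  define \<rho> where "\<rho> = b / (4 * (L + e))"
  note radii = three_circles_exponent_ge[OF \<open>0 < b\<close> \<open>b < L\<close> \<open>0 < e\<close> \<open>e \<le> L\<close> \<open>0 \<le> r\<close>,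
      folded q_def \<rho>_def, folded t_def, folded R_def]
  define u where "u = (s - of_real L) / (s + of_real (L + 2*e))"
  have "s + of_real (L + 2*e) \<noteq> 0"
  proof
    assume "s + of_real (L + 2*e) = 0"
    then have "Re (s + of_real (L + 2*e)) = 0" by (simp only: zero_complex.sel)
    then show False using s assms by simp
  qed
  then have s_eq: "s = half_plane_map e L u"
    unfolding u_def using assms by (intro half_plane_map_inverse[symmetric]) auto
  have "norm u ^ 2 \<le> q" unfolding u_def q_def using s assms by (intro norm_half_plane_preimage_le) auto
  then have "norm u \<le> t" unfolding t_def by (rule real_le_rsqrt)
  moreover have "4 * (L + e) * \<rho> \<le> b" using assms by (simp add: \<rho>_def)
  ultimately have "norm (G s) \<le> exp (M - (m + M) * (ln (R/t) / (2 * ln (R/\<rho>))))"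
    unfolding s_eq using radii(1-5) assms
    by (intro half_plane_map_two_constant[OF holG _ _ _ _ _ _ _ _ _ upper near]) auto
  also have "\<dots> \<le> exp (M - (m + M) * (L * e / (4 * ((5*L/2)^2 + r^2) * ln (8*L/b))))"
    using mult_left_mono[OF radii(6), of "m + M"] \<open>0 < m + M\<close> by simp
  finally show ?thesis .
qed

lemma norm_exp_square_div:
  fixes z :: complex and h :: real
  shows "norm (exp (z^2 / of_real (2*h))) = exp (((min (Re z) 0)^2 - Phi z) / (2*h))"
proof -
  have "Re (z^2 / of_real (2*h)) = ((Re z)^2 - (Im z)^2) / (2*h)"
    by (simp add: Re_divide_of_real power2_eq_square)
  also have "(Re z)^2 - (Im z)^2 = (min (Re z) 0)^2 - Phi z"
    by (simp add: Phi_def min_def)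
  finally show ?thesis by (simp add: norm_exp_eq_Re)
qed

lemma weighted_decay_near_imaginary_axis:
  fixes F :: "complex \<Rightarrow> complex" and h c L b e r :: real
  assumes "0 < h" "F holomorphic_on UNIV" "0 < c" "0 < b" "b < L" "0 < e" "e \<le> L" "0 \<le> r"
    and global: "\<And>z. exp (- Phi z / (2*h)) * norm (F z) \<le> 1"
    and near: "\<And>z. norm (z - of_real L) \<le> b \<Longrightarrow> exp (- Phi z / (2*h)) * norm (F z) \<le> exp (- c / (2*h))"
    and s: "\<bar>Re s\<bar> \<le> e/2" "\<bar>Im s\<bar> \<le> r"
  shows "exp (- Phi s / (2*h)) * norm (F s)
           \<le> exp ((e^2 - c * (L * e / (4 * ((5*L/2)^2 + r^2) * ln (8*L/b)))) / (2*h))"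
proof -
  define \<kappa> where "\<kappa> = L * e / (4 * ((5*L/2)^2 + r^2) * ln (8*L/b))"
  define G where "G z = F z * exp (z^2 / of_real (2*h))" for z
  have norm_G: "norm (G z) = exp (- Phi z / (2*h)) * norm (F z) * exp ((min (Re z) 0)^2 / (2*h))" for z
  proof -
    have "norm (G z) = norm (F z) * exp (((min (Re z) 0)^2 - Phi z) / (2*h))"
      unfolding G_def norm_mult norm_exp_square_div ..
    then show ?thesis by (simp add: diff_divide_distrib exp_diff exp_minus field_simps)
  qed
  have "G holomorphic_on UNIV" unfolding G_def using assms by (intro holomorphic_intros) auto
  moreover have "norm (G z) \<le> exp (e^2 / (2*h))" if "- e \<le> Re z" for z
  proof -
    have "(min (Re z) 0)^2 \<le> e^2" using that \<open>0 < e\<close> by (intro power2_le_iff_abs_le[THEN iffD2]) auto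
    then have "exp ((min (Re z) 0)^2 / (2*h)) \<le> exp (e^2 / (2*h))"
      using \<open>0 < h\<close> by (simp add: divide_right_mono)
    then show ?thesis unfolding norm_G using mult_mono[OF global[of z]] by simp
  qed
  moreover have "norm (G z) \<le> exp (- (c / (2*h)))" if "norm (z - of_real L) \<le> b" for z
  proof -
    have "\<bar>Re z - L\<bar> \<le> b" using abs_Re_le_cmod[of "z - of_real L"] that by simp
    then have "min (Re z) 0 = 0" using \<open>b < L\<close> by auto
    then show ?thesis unfolding norm_G using near[OF that] by simp
  qed
  ultimately have "norm (G s) \<le> exp (e^2 / (2*h) - (c / (2*h) + e^2 / (2*h)) * \<kappa>)"
    unfolding \<kappa>_def using assms by (intro half_plane_two_constant) (auto simp: add_pos_nonneg)
  also have "\<dots> \<le> exp ((e^2 - c * \<kappa>) / (2*h))"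
  proof -
    have "0 \<le> \<kappa>" unfolding \<kappa>_def using assms by (simp add: add_pos_nonneg)
    then show ?thesis using \<open>0 < h\<close> by (simp add: field_simps)
  qed
  finally have "norm (G s) \<le> exp ((e^2 - c * \<kappa>) / (2*h))" .
  moreover have "exp (- Phi s / (2*h)) * norm (F s) \<le> norm (G s)"
  proof -
    have "1 \<le> exp ((min (Re s) 0)^2 / (2*h))" using \<open>0 < h\<close> by simp
    from mult_left_mono[OF this, of "exp (- Phi s / (2*h)) * norm (F s)"]
    show ?thesis unfolding norm_G by simp
  qed
  ultimately show ?thesis unfolding \<kappa>_def by linarith
qed

theorem lemma4p1:
  fixes c L b r :: real
  assumes "c > 0" and "b > 0" and "L > b" and "r \<ge> 0"
  shows "\<exists>c' \<delta>. c' > 0 \<and> \<delta> > 0 \<and>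
    (\<forall>(h::real) (F::complex \<Rightarrow> complex).
       h > 0 \<longrightarrow> F holomorphic_on UNIV \<longrightarrow>
       (\<forall>s. exp (- Phi s / (2*h)) * cmod (F s) \<le> 1) \<longrightarrow>
       (\<forall>s. cmod (s - of_real L) \<le> b \<longrightarrow>
            exp (- Phi s / (2*h)) * cmod (F s) \<le> exp (- c / (2*h))) \<longrightarrow>
       (\<forall>s. \<bar>Re s\<bar> \<le> \<delta> \<and> \<bar>Im s\<bar> \<le> r \<longrightarrow>
            exp (- Phi s / (2*h)) * cmod (F s) \<le> exp (- c' / (2*h))))"
proof -
  define D where "D = (5*L/2)^2 + r^2"
  define \<Lambda> where "\<Lambda> = ln (8*L/b)"
  define e where "e = min L (c * L / (8 * D * \<Lambda>))"
  define \<kappa> where "\<kappa> = L * e / (4 * D * \<Lambda>)"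
  have "0 < D" "0 < \<Lambda>" using assms by (simp_all add: D_def \<Lambda>_def add_pos_nonneg)
  then have "0 < e" "e \<le> L" using assms by (simp_all add: e_def)
  \<comment> \<open>\<open>\<kappa>\<close> is linear in \<open>e\<close>, so for small \<open>e\<close> the gain \<open>c \<kappa>\<close> beats the loss \<open>e\<^sup>2\<close>\<close>
  have "2 * e^2 \<le> c * \<kappa>"
  proof -
    have "e \<le> c * L / (8 * D * \<Lambda>)" by (simp add: e_def)
    then have "e * (8 * D * \<Lambda>) \<le> c * L" using \<open>0 < D\<close> \<open>0 < \<Lambda>\<close> by (simp add: pos_le_divide_eq)
    then show ?thesis using \<open>0 < e\<close> \<open>0 < D\<close> \<open>0 < \<Lambda>\<close>
      by (simp add: \<kappa>_def power2_eq_square field_simps mult_left_mono)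
  qed
  then have "0 < c * \<kappa> - e^2" using \<open>0 < e\<close> by (smt (verit) zero_less_power)
  moreover have "exp (- Phi s / (2*h)) * cmod (F s) \<le> exp (- (c * \<kappa> - e^2) / (2*h))"
    if "0 < h" "F holomorphic_on UNIV" "\<forall>s. exp (- Phi s / (2*h)) * cmod (F s) \<le> 1"
      "\<forall>s. cmod (s - of_real L) \<le> b \<longrightarrow> exp (- Phi s / (2*h)) * cmod (F s) \<le> exp (- c / (2*h))"
      "\<bar>Re s\<bar> \<le> e/2" "\<bar>Im s\<bar> \<le> r"
    for h F s
    using weighted_decay_near_imaginary_axis[of h F c b L e r s] that assms \<open>0 < e\<close> \<open>e \<le> L\<close>
    by (simp add: \<kappa>_def D_def \<Lambda>_def)
  ultimately show ?thesis using \<open>0 < e\<close> by (intro exI[of _ "c * \<kappa> - e^2"] exI[of _ "e/2"]) auto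
qed

end
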